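(* Consider the stochastic quadratic problem in the context, run with the step decay schedule in the context with $\eta_1\le1/L$. Assume: (1) $H$ is diagonal; (2) $\mathbb{E}_\xi[n_tn_t^\top]=\sigma^2H$ for all $t$; (3) $\lambda_j(w_{0,j}-w_{*,j})^2\neq0$ for every $j=1,\dots,d$, where $\lambda_j$ is the $j$-th diagonal entry of $H$. Then the final iterate satisfies $$\mathbb{E}[f(w_{T+1})-f(w_* )]=\Omega\!\left(\frac{d\sigma^2}{T}\log T\right),$$ that is, it is bounded below by an absolute constant times $\frac{d\sigma^2}{T}\log T$ for all sufficiently large $T$.
   Context: Let $\xi$ be a random data sample, $H(\xi)\in\mathbb{R}^{d\times d}$ a random symmetric matrix and $b(\xi)\in\mathbb{R}^d$ a random vector. Define $f(w,\xi)=\frac12w^\top H(\xi)w-b(\xi)^\top w$ and $f(w)=\mathbb{E}_\xi f(w,\xi)$. Set $H=\mathbb{E}H(\xi)$, assumed positive definite, and $b=\mathbb{E}b(\xi)$, with $w_*=H^{-1}b$. Let $\mu=\lambda_{\min}(H)$ and $L=\lambda_{\max}(H)$. The noise at step $t$ is $n_t=(Hw_t-b)-(H(\xi_t)w_t-b(\xi_t))$, with $\xi_t$ i.i.d. copies of $\xi$. Step decay schedule (Ge et al. 2019). Here $\log$ denotes $\log_2$, and $T$ is such that $\log T$ and $T/\log T$ are integers. For $\ell=0,1,\dots,\log T-1$, $$\eta_t=\eta_1/2^\ell\quad\text{for }t\in\left[1+\ell\tfrac{T}{\log T},\,(\ell+1)\tfrac{T}{\log T}\right].$$ Starting from a deterministic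 $w_0$, SGD performs $w_{t+1}=w_t-\eta_t(H(\xi_t)w_t-b(\xi_t))$ for $t=1,\dots,T$, with $\eta_0=0$ (equivalently $w_1=w_0$). The final iterate is $w_{T+1}$. *)

theory Defs
  imports "HOL-Probability.Probability" "Jordan_Normal_Form.Char_Poly"
begin

definition H_mean :: "'s measure \<Rightarrow> ('s \<Rightarrow> real mat) \<Rightarrow> nat \<Rightarrow> real mat" where
  "H_mean P Hs d = mat d d (\<lambda>(i,j). \<integral>\<xi>. Hs \<xi> $$ (i,j) \<partial>P)"

definition b_mean :: "'s measure \<Rightarrow> ('s \<Rightarrow> real vec) \<Rightarrow> nat \<Rightarrow> real vec" where
  "b_mean P bs d = vec d (\<lambda>i. \<integral>\<xi>. bs \<xi> $ i \<partial>P)"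

definition fobj :: "real mat \<Rightarrow> real vec \<Rightarrow> real vec \<Rightarrow> real" where
  "fobj Hm bm w = 1/2 * scalar_prod w (Hm *\<^sub>v w) - scalar_prod bm w"

definition pos_def_mat :: "nat \<Rightarrow> real mat \<Rightarrow> bool" where
  "pos_def_mat d A \<longleftrightarrow> A \<in> carrier_mat d d \<and>
     (\<forall>v \<in> carrier_vec d. v \<noteq> 0\<^sub>v d \<longrightarrow> scalar_prod v (A *\<^sub>v v) > 0)"

definition symmetric_mat :: "real mat \<Rightarrow> bool" where
  "symmetric_mat A \<longleftrightarrow> A\<^sup>T = A"

definition lambda_max :: "real mat \<Rightarrow> real" where
  "lambda_max A = Max {k. eigenvalue A k}"

definition wstar :: "nat \<Rightarrow> real mat \<Rightarrow> real vec \<Rightarrow> real vec" where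
  "wstar d Hm bm = (THE w. w \<in> carrier_vec d \<and> Hm *\<^sub>v w = bm)"

text \<open>Step decay schedule with T = 2^k (so log_2 T = k): eta_0 = 0 and, for
  t in [1 + l T/k, (l+1) T/k], eta_t = eta_1 / 2^l.\<close>
definition step_decay :: "real \<Rightarrow> nat \<Rightarrow> nat \<Rightarrow> nat \<Rightarrow> real" where
  "step_decay eta1 T k t = (if t = 0 then 0 else eta1 / 2 ^ ((t - 1) div (T div k)))"

text \<open>SGD iterates along a sample path om (om t = xi_t):
  w_0 given, w_{t+1} = w_t - eta_t (H(xi_t) w_t - b(xi_t)).  Since eta_0 = 0, w_1 = w_0.\<close>
primrec sgd :: "('s \<Rightarrow> real mat) \<Rightarrow> ('s \<Rightarrow> real vec) \<Rightarrow> (nat \<Rightarrow> real) \<Rightarrow> real vec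
                \<Rightarrow> nat \<Rightarrow> (nat \<Rightarrow> 's) \<Rightarrow> real vec" where
  "sgd Hs bs eta w0 0 om = w0"
| "sgd Hs bs eta w0 (Suc t) om =
     sgd Hs bs eta w0 t om - eta t \<cdot>\<^sub>v (Hs (om t) *\<^sub>v sgd Hs bs eta w0 t om - bs (om t))"

definition noise :: "real mat \<Rightarrow> real vec \<Rightarrow> ('s \<Rightarrow> real mat) \<Rightarrow> ('s \<Rightarrow> real vec)
                     \<Rightarrow> real vec \<Rightarrow> 's \<Rightarrow> real vec" where
  "noise Hm bm Hs bs w \<xi> = (Hm *\<^sub>v w - bm) - (Hs \<xi> *\<^sub>v w - bs \<xi>)"

end

theory Submission
  imports Defs
begin

(* Since H is diagonal, f(w) - f(w_star) = 1/2 sum_j lambda_j e_j^2 with e = w - w_star, and the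
   coordinates of e evolve separately.  As xi_t is independent of w_t, the noise hypothesis turns
   v_t = E[lambda_j e_{t,j}^2] into the exact recursion v_{t+1} = (1 - h_t)^2 v_t + sigma^2 h_t^2
   with h_t = eta_t lambda_j.  Under step decay h_t = a / 2^l on the l-th phase, of length
   m = T / log T, where a = eta_1 lambda_j.  In the phase with 1 <= m a / 2^l < 2 the variance
   climbs to at least sigma^2 / (4 m); each later phase l' multiplies it by at least
   exp (-4 m a / 2^l'), and these exponents sum to less than 8.  Summing over the d coordinates
   gives c = exp (-8) / 8.  Before the critical phase only v_t >= 0 is used. *)

definition square_integrable :: "'a measure \<Rightarrow> ('a \<Rightarrow> real) \<Rightarrow> bool" where
  "square_integrable M f \<longleftrightarrow> f \<in> borel_measurable M \<and> integrable M (\<lambda>x. (f x)\<^sup>2)"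

lemma square_integrable_mult_integrable:
  assumes "square_integrable M f" "square_integrable M g"
  shows "integrable M (\<lambda>x. f x * g x)"
proof (rule Bochner_Integration.integrable_bound)
  show "integrable M (\<lambda>x. (f x)\<^sup>2 + (g x)\<^sup>2)" "(\<lambda>x. f x * g x) \<in> borel_measurable M"
    using assms by (auto simp: square_integrable_def)
  have "\<bar>f x * g x\<bar> \<le> (f x)\<^sup>2 + (g x)\<^sup>2" for x
  proof -
    have "\<bar>f x * g x\<bar> \<le> 2 * \<bar>f x\<bar> * \<bar>g x\<bar>"
      by (simp add: abs_mult)
    also have "\<dots> \<le> (f x)\<^sup>2 + (g x)\<^sup>2"
      using sum_squares_bound[of "\<bar>f x\<bar>" "\<bar>g x\<bar>"] by simp
    finally show ?thesis .
  qed
  then show "AE x in M. norm (f x * g x) \<le> norm ((f x)\<^sup>2 + (g x)\<^sup>2)"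
    by (intro AE_I2) simp
qed

lemma square_integrable_add:
  assumes "square_integrable M f" "square_integrable M g"
  shows "square_integrable M (\<lambda>x. f x + g x)"
proof -
  have "integrable M (\<lambda>x. (f x)\<^sup>2 + (g x)\<^sup>2 + 2 * (f x * g x))"
    using assms square_integrable_mult_integrable[OF assms] by (auto simp: square_integrable_def)
  then show ?thesis
    using assms by (auto simp: square_integrable_def power2_sum mult.assoc)
qed

lemma square_integrable_cmult:
  "square_integrable M f \<Longrightarrow> square_integrable M (\<lambda>x. c * f x)"
  by (auto simp: square_integrable_def power_mult_distrib)

lemma square_integrable_diff:
  assumes "square_integrable M f" "square_integrable M g"
  shows "square_integrable M (\<lambda>x. f x - g x)"
  using square_integrable_add[OF assms(1) square_integrable_cmult[OF assms(2), of "-1"]] by simp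

lemma (in finite_measure) square_integrable_const: "square_integrable M (\<lambda>x. c)"
  by (simp add: square_integrable_def)

lemma (in finite_measure) square_integrable_sum:
  "(\<And>i. i \<in> S \<Longrightarrow> square_integrable M (f i)) \<Longrightarrow> square_integrable M (\<lambda>x. \<Sum>i\<in>S. f i x)"
  by (induction S rule: infinite_finite_induct) (auto intro: square_integrable_add square_integrable_const)

lemma (in prob_space) expectation_affine_square:
  assumes N: "square_integrable M N" and centered: "expectation N = 0"
  shows "expectation (\<lambda>x. (a + b * N x)\<^sup>2) = a\<^sup>2 + b\<^sup>2 * expectation (\<lambda>x. (N x)\<^sup>2)"
proof -
  have "integrable M N" "integrable M (\<lambda>x. (N x)\<^sup>2)"
    using N by (auto simp: square_integrable_def intro: square_integrable_imp_integrable)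
  then have "expectation (\<lambda>x. a\<^sup>2 + 2 * a * b * N x + b\<^sup>2 * (N x)\<^sup>2)
      = a\<^sup>2 + 2 * a * b * expectation N + b\<^sup>2 * expectation (\<lambda>x. (N x)\<^sup>2)"
    by (simp add: prob_space)
  then show ?thesis
    using centered by (simp add: power2_sum power_mult_distrib algebra_simps)
qed

lemma nn_integral_PiM_resample:
  assumes M: "\<And>i. i \<in> I \<Longrightarrow> prob_space (M i)" and t: "t \<in> I"
    and g: "g \<in> borel_measurable (PiM I M)"
  shows "(\<integral>\<^sup>+ X. g X \<partial>(PiM I M)) = (\<integral>\<^sup>+ X. \<integral>\<^sup>+ y. g (X(t := y)) \<partial>(M t) \<partial>(PiM I M))"
proof -
  interpret Mt: prob_space "M t" using M t .
  interpret PI: prob_space "PiM I M" using M by (rule prob_space_PiM)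
  interpret pair_sigma_finite "M t" "PiM I M" ..
  let ?upd = "\<lambda>(y, X). X(t := y)"
  have "(\<lambda>z. (snd z)(t := fst z)) \<in> M t \<Otimes>\<^sub>M PiM I M \<rightarrow>\<^sub>M PiM I M"
    using t by (intro measurable_fun_upd[where J = I]) auto
  then have upd: "?upd \<in> M t \<Otimes>\<^sub>M PiM I M \<rightarrow>\<^sub>M PiM I M"
    by (simp add: case_prod_beta')
  have distr: "distr (M t \<Otimes>\<^sub>M PiM I M) (PiM I M) ?upd = PiM I M"
    using distr_pair_PiM_eq_PiM[of I M t] M t by (simp add: insert_absorb)
  have "(\<integral>\<^sup>+ X. g X \<partial>(PiM I M)) = (\<integral>\<^sup>+ z. g (?upd z) \<partial>(M t \<Otimes>\<^sub>M PiM I M))"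
    using nn_integral_distr[OF upd, of g] g by (simp add: distr)
  also have "\<dots> = (\<integral>\<^sup>+ X. \<integral>\<^sup>+ y. g (X(t := y)) \<partial>(M t) \<partial>(PiM I M))"
    using nn_integral_snd[of "\<lambda>z. g (?upd z)"] measurable_compose[OF upd g] by simp
  finally show ?thesis .
qed

section \<open>A noisy contraction recursion\<close>

primrec noisy_rec :: "(nat \<Rightarrow> real) \<Rightarrow> real \<Rightarrow> real \<Rightarrow> nat \<Rightarrow> real" where
  "noisy_rec h s v0 0 = v0"
| "noisy_rec h s v0 (Suc t) = (1 - h t)\<^sup>2 * noisy_rec h s v0 t + s * (h t)\<^sup>2"

lemma noisy_rec_nonneg: "0 \<le> v0 \<Longrightarrow> 0 \<le> s \<Longrightarrow> 0 \<le> noisy_rec h s v0 t"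
  by (induction t) auto

lemma noisy_rec_constant_phase:
  assumes "\<And>i. i < n \<Longrightarrow> h (p + i) = x"
  shows "noisy_rec h s v0 (p + n)
    = ((1 - x)\<^sup>2) ^ n * noisy_rec h s v0 p + s * x\<^sup>2 * (\<Sum>i<n. ((1 - x)\<^sup>2) ^ i)"
  using assms
proof (induction n)
  case (Suc n)
  then have "noisy_rec h s v0 (p + Suc n) = (1 - x)\<^sup>2 * noisy_rec h s v0 (p + n) + s * x\<^sup>2"
    by simp
  also have "\<dots> = ((1 - x)\<^sup>2) ^ Suc n * noisy_rec h s v0 p
      + s * x\<^sup>2 * (1 + (1 - x)\<^sup>2 * (\<Sum>i<n. ((1 - x)\<^sup>2) ^ i))"
    using Suc by (simp add: algebra_simps)
  also have "1 + (1 - x)\<^sup>2 * (\<Sum>i<n. ((1 - x)\<^sup>2) ^ i) = (\<Sum>i<Suc n. ((1 - x)\<^sup>2) ^ i)"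
    by (subst sum.lessThan_Suc_shift) (simp add: sum_distrib_left)
  finally show ?case .
qed simp

lemma geometric_sum_one_minus_sq_lower_bound:
  fixes x :: real
  assumes x: "0 < x" "x \<le> 1/2" and nx: "1 \<le> n * x"
  shows "x / 4 \<le> x\<^sup>2 * (\<Sum>i<n. ((1 - x)\<^sup>2) ^ i)"
proof -
  let ?q = "(1 - x)\<^sup>2"
  have "?q ^ n = (1 - x) ^ (2 * n)"
    by (simp add: power_mult)
  also have "\<dots> \<le> exp (- x) ^ (2 * n)"
    using x exp_ge_add_one_self[of "- x"] by (intro power_mono) auto
  also have "\<dots> = exp (- 2 * (n * x))"
    by (simp flip: exp_of_nat_mult)
  also have "\<dots> \<le> exp (- 2)"
    using nx by simp
  also have "\<dots> \<le> 1 / 2"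
    using exp_ge_add_one_self[of 2] by (simp add: exp_minus field_simps)
  finally have "1 / 2 \<le> (1 - ?q) * (\<Sum>i<n. ?q ^ i)"
    by (simp add: one_diff_power_eq[symmetric])
  also have "\<dots> \<le> 2 * x * (\<Sum>i<n. ?q ^ i)"
  proof (rule mult_right_mono)
    show "1 - ?q \<le> 2 * x"
      by (simp add: power2_eq_square algebra_simps)
  qed (simp add: sum_nonneg)
  finally show ?thesis
    using x by (simp add: power2_eq_square field_simps)
qed

lemma exp_le_one_minus_sq_power:
  fixes x :: real
  assumes x: "0 \<le> x" "x \<le> 1/2"
  shows "exp (- 4 * real n * x) \<le> ((1 - x)\<^sup>2) ^ n"
proof -
  have "x * (2 * x) \<le> x * 1"
    using x by (intro mult_left_mono) auto
  then have "x\<^sup>2 \<le> x / 2"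
    by (simp add: power2_eq_square)
  then have "- 2 * x \<le> ln (1 - x)"
    using ln_one_minus_pos_lower_bound[OF x] by linarith
  then have "exp (- 4 * x) \<le> exp (2 * ln (1 - x))"
    by simp
  also have "\<dots> = (1 - x)\<^sup>2"
    using x by (simp add: exp_of_nat_mult[of 2, simplified])
  finally have "exp (- 4 * x) ^ n \<le> ((1 - x)\<^sup>2) ^ n"
    by (intro power_mono) auto
  then show ?thesis
    by (simp flip: exp_of_nat_mult add: mult_ac)
qed

lemma noisy_rec_phase_gain:
  assumes phase: "\<And>i. i < n \<Longrightarrow> h (p + i) = x"
    and x: "0 < x" "x \<le> 1/2" "1 \<le> n * x" and "0 \<le> v0" "0 \<le> s"
  shows "s * x / 4 \<le> noisy_rec h s v0 (p + n)"
proof -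
  have "s * (x / 4) \<le> s * (x\<^sup>2 * (\<Sum>i<n. ((1 - x)\<^sup>2) ^ i))"
    using geometric_sum_one_minus_sq_lower_bound[OF x] \<open>0 \<le> s\<close> by (rule mult_left_mono)
  moreover have "0 \<le> ((1 - x)\<^sup>2) ^ n * noisy_rec h s v0 p"
    using assms by (simp add: noisy_rec_nonneg)
  moreover have "noisy_rec h s v0 (p + n)
      = ((1 - x)\<^sup>2) ^ n * noisy_rec h s v0 p + s * x\<^sup>2 * (\<Sum>i<n. ((1 - x)\<^sup>2) ^ i)"
    by (rule noisy_rec_constant_phase) (simp add: phase)
  ultimately show ?thesis
    by (simp add: mult.assoc)
qed

lemma noisy_rec_phase_decay:
  assumes phase: "\<And>i. i < n \<Longrightarrow> h (p + i) = x"
    and x: "0 \<le> x" "x \<le> 1/2" and "0 \<le> v0" "0 \<le> s"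
  shows "exp (- 4 * real n * x) * noisy_rec h s v0 p \<le> noisy_rec h s v0 (p + n)"
proof -
  have "exp (- 4 * real n * x) * noisy_rec h s v0 p \<le> ((1 - x)\<^sup>2) ^ n * noisy_rec h s v0 p"
    using exp_le_one_minus_sq_power[OF x] assms by (intro mult_right_mono noisy_rec_nonneg)
  moreover have "0 \<le> s * x\<^sup>2 * (\<Sum>i<n. ((1 - x)\<^sup>2) ^ i)"
    using \<open>0 \<le> s\<close> by (simp add: sum_nonneg)
  moreover have "noisy_rec h s v0 (p + n)
      = ((1 - x)\<^sup>2) ^ n * noisy_rec h s v0 p + s * x\<^sup>2 * (\<Sum>i<n. ((1 - x)\<^sup>2) ^ i)"
    by (rule noisy_rec_constant_phase) (simp add: phase)
  ultimately show ?thesis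
    by linarith
qed

(* Phase l occupies the times l * m + 1, ..., l * m + m, since step_decay starts at t = 1. *)

lemma noisy_rec_halving_phases:
  fixes a :: real
  assumes phases: "\<And>l i. l < k \<Longrightarrow> i < m \<Longrightarrow> h (l * m + 1 + i) = a / 2 ^ l"
    and a: "0 < a" "a / 2 ^ p \<le> 1/2" and "0 \<le> v0" "0 \<le> s"
    and "p \<le> q" "q \<le> k"
  shows "exp (- 8 * real m * a * (1 / 2 ^ p - 1 / 2 ^ q)) * noisy_rec h s v0 (p * m + 1)
    \<le> noisy_rec h s v0 (q * m + 1)"
  using \<open>p \<le> q\<close> \<open>q \<le> k\<close>
proof (induction q rule: dec_induct)
  case (step q)
  let ?v = "noisy_rec h s v0"
  have "a / 2 ^ q \<le> a / 2 ^ p"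
    using a step.hyps by (intro divide_left_mono) auto
  then have "a / 2 ^ q \<le> 1/2"
    using a by linarith
  then have "exp (- 4 * real m * (a / 2 ^ q)) * ?v (q * m + 1) \<le> ?v (q * m + 1 + m)"
    using a assms step.prems by (intro noisy_rec_phase_decay phases) auto
  have "exp (- 8 * real m * a * (1 / 2 ^ p - 1 / 2 ^ Suc q))
      = exp (- 4 * real m * (a / 2 ^ q)) * exp (- 8 * real m * a * (1 / 2 ^ p - 1 / 2 ^ q))"
    by (simp add: exp_add[symmetric] field_simps)
  then have "exp (- 8 * real m * a * (1 / 2 ^ p - 1 / 2 ^ Suc q)) * ?v (p * m + 1)
      = exp (- 4 * real m * (a / 2 ^ q)) * (exp (- 8 * real m * a * (1 / 2 ^ p - 1 / 2 ^ q)) * ?v (p * m + 1))"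
    by (simp only: mult.assoc)
  also have "\<dots> \<le> exp (- 4 * real m * (a / 2 ^ q)) * ?v (q * m + 1)"
    using step.IH step.prems by (intro mult_left_mono) auto
  also have "\<dots> \<le> ?v (q * m + 1 + m)"
    by fact
  also have "q * m + 1 + m = Suc q * m + 1"
    by simp
  finally show ?case .
qed simp

lemma ex_threshold_crossing:
  fixes f :: "nat \<Rightarrow> real"
  assumes "1 \<le> f 0" "f n < 1"
  shows "\<exists>l<n. 1 \<le> f l \<and> f (Suc l) < 1"
  using assms(2)
proof (induction n)
  case (Suc n)
  then show ?case
    by (cases "f n < 1") (auto intro: less_SucI)
qed (use assms(1) in simp)

lemma noisy_rec_step_decay_phases_lower_bound:
  fixes a :: real
  assumes phases: "\<And>l i. l < k \<Longrightarrow> i < m \<Longrightarrow> h (l * m + 1 + i) = a / 2 ^ l"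
    and a: "0 < a" "1 \<le> real m * a" "real m * a < 2 ^ (k - 1)" and m: "4 \<le> m"
    and "0 \<le> v0" "0 \<le> s"
  shows "exp (- 8) * s / (4 * real m) \<le> noisy_rec h s v0 (k * m + 1)"
proof -
  obtain l where l: "l < k - 1" "1 \<le> real m * a / 2 ^ l" "real m * a / 2 ^ Suc l < 1"
    using ex_threshold_crossing[of "\<lambda>l. real m * a / 2 ^ l" "k - 1"] a by auto
  define x where "x = a / 2 ^ l"
  have x: "0 < x" "1 \<le> real m * x" "real m * x < 2"
    using a l by (auto simp: x_def field_simps)
  have "real m * x \<le> real m * (1/2)"
    using x m by linarith
  then have "x \<le> 1/2"
    using m by simp
  then have "s * x / 4 \<le> noisy_rec h s v0 (l * m + 1 + m)"
    using x assms l by (intro noisy_rec_phase_gain) (auto simp: x_def intro: phases)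
  moreover have "s / (4 * real m) \<le> s * x / 4"
    using x m \<open>0 \<le> s\<close> mult_left_mono[of 1 "x * real m" s] by (simp add: field_simps)
  ultimately have crossing: "s / (4 * real m) \<le> noisy_rec h s v0 (Suc l * m + 1)"
    by (simp add: add.commute add.left_commute)
  have "real m * a * (1 / 2 ^ Suc l - 1 / 2 ^ k) \<le> real m * a / 2 ^ Suc l"
    using a by (simp add: right_diff_distrib)
  then have "real m * a * (1 / 2 ^ Suc l - 1 / 2 ^ k) \<le> 1"
    using l(3) by linarith
  then have "exp (- 8) \<le> exp (- 8 * real m * a * (1 / 2 ^ Suc l - 1 / 2 ^ k))"
    by simp
  moreover have "exp (- 8 * real m * a * (1 / 2 ^ Suc l - 1 / 2 ^ k)) * noisy_rec h s v0 (Suc l * m + 1)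
      \<le> noisy_rec h s v0 (k * m + 1)"
    using assms l \<open>x \<le> 1/2\<close> by (intro noisy_rec_halving_phases[OF phases]) (auto simp: x_def)
  ultimately show ?thesis
    using crossing \<open>0 \<le> s\<close> m
    by (smt (verit) divide_nonneg_nonneg exp_gt_zero mult_mono of_nat_0_le_iff times_divide_eq_right)
qed

lemma step_decay_mult: "step_decay a T k t * c = step_decay (a * c) T k t"
  by (simp add: step_decay_def)

lemma step_decay_phase:
  assumes "i < T div k"
  shows "step_decay a T k (l * (T div k) + 1 + i) = a / 2 ^ l"
  using assms by (simp add: step_decay_def)

lemma square_le_two_power: "4 \<le> k \<Longrightarrow> k * k \<le> (2::nat) ^ k"
proof (induction k rule: dec_induct)
  case (step k)
  have "2 * k + 1 \<le> 4 * k"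
    using step.hyps by simp
  also have "\<dots> \<le> k * k"
    using step.hyps by (intro mult_le_mono1)
  finally have "Suc k * Suc k \<le> 2 * (k * k)"
    by simp
  also have "\<dots> \<le> 2 * 2 ^ k"
    using step.IH by simp
  finally show ?case
    by simp
qed simp

lemma step_decay_phase_length_bounds:
  fixes a :: real
  assumes T: "T = 2 ^ k" "k dvd T" and a: "0 < a" "4 / a + 2 * a \<le> k"
  shows "4 \<le> T div k" "1 \<le> real (T div k) * a" "real (T div k) * a < 2 ^ (k - 1)"
proof -
  define m where "m = T div k"
  have "4 * a \<le> 4 + 2 * a * a"
    using zero_le_power2[of "a - 1"] by (simp add: power2_eq_square algebra_simps)
  then have "4 \<le> 4 / a + 2 * a"
    using a by (simp add: field_simps)
  then have k: "4 \<le> k"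
    using a by linarith
  have Tkm: "T = k * m"
    using T by (simp add: m_def)
  then have "k * k \<le> k * m"
    using square_le_two_power[OF k] T by simp
  then have km: "k \<le> m"
    using k by simp
  then show "4 \<le> T div k"
    using k by (simp add: m_def)
  have "4 / a \<le> k"
    using a by linarith
  then have "4 \<le> a * k"
    using a by (simp add: field_simps)
  also have "a * k \<le> a * m"
    using km a by simp
  finally show "1 \<le> real (T div k) * a"
    by (simp add: m_def mult.commute)
  have "0 < 4 / a"
    using a by simp
  then have "2 * a < k"
    using a by linarith
  then have "real m * (2 * a) < real m * k"
    using km k by (intro mult_strict_left_mono) auto
  also have "real m * k = real T"
    using Tkm by (simp add: mult.commute)
  also have "\<dots> = 2 * 2 ^ (k - 1)"
    using T k by (cases k) auto
  finally show "real (T div k) * a < 2 ^ (k - 1)"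
    by (simp add: m_def)
qed

lemma noisy_rec_step_decay_lower_bound:
  fixes a :: real
  assumes T: "T = 2 ^ k" "k dvd T" and a: "0 < a" "4 / a + 2 * a \<le> k"
    and "0 \<le> v0" "0 \<le> s"
  shows "exp (- 8) / 4 * s * log 2 T / T \<le> noisy_rec (step_decay a T k) s v0 (T + 1)"
proof -
  define m where "m = T div k"
  note m = step_decay_phase_length_bounds[OF assms(1-4), folded m_def]
  have phases: "step_decay a T k (l * m + 1 + i) = a / 2 ^ l" if "i < m" for l i
    using that unfolding m_def by (rule step_decay_phase)
  have Tkm: "T = k * m"
    using T by (simp add: m_def)
  have "exp (- 8) * s / (4 * real m) \<le> noisy_rec (step_decay a T k) s v0 (k * m + 1)"
    using assms m by (intro noisy_rec_step_decay_phases_lower_bound[OF phases]) auto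
  moreover have "exp (- 8) / 4 * s * log 2 T / T = exp (- 8) * s / (4 * real m)"
  proof -
    have "0 < k"
      using T by (cases k) auto
    moreover have "log 2 T = k"
      using T by simp
    moreover have "real T = real k * real m"
      using Tkm by (simp only: of_nat_mult)
    ultimately show ?thesis
      using m(1) by (simp add: field_simps)
  qed
  ultimately show ?thesis
    using Tkm by (simp add: mult.commute)
qed

section \<open>SGD on a quadratic with diagonal mean Hessian\<close>

locale diagonal_quadratic_sgd =
  fixes P :: "'s measure" and d :: nat and Hs :: "'s \<Rightarrow> real mat" and bs :: "'s \<Rightarrow> real vec"
    and w0 :: "real vec"
  assumes prob_P: "prob_space P"
    and Hs_carrier: "\<And>\<xi>. \<xi> \<in> space P \<Longrightarrow> Hs \<xi> \<in> carrier_mat d d"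
    and bs_carrier: "\<And>\<xi>. \<xi> \<in> space P \<Longrightarrow> bs \<xi> \<in> carrier_vec d"
    and Hs_square_integrable: "\<And>i j. i < d \<Longrightarrow> j < d \<Longrightarrow> square_integrable P (\<lambda>\<xi>. Hs \<xi> $$ (i, j))"
    and bs_square_integrable: "\<And>i. i < d \<Longrightarrow> square_integrable P (\<lambda>\<xi>. bs \<xi> $ i)"
    and w0_carrier: "w0 \<in> carrier_vec d"
    and pos_def: "pos_def_mat d (H_mean P Hs d)"
    and diagonal: "diagonal_mat (H_mean P Hs d)"
begin

sublocale P: prob_space P
  by (rule prob_P)

abbreviation "Hm \<equiv> H_mean P Hs d"
abbreviation "bm \<equiv> b_mean P bs d"
abbreviation "wopt \<equiv> wstar d Hm bm"
abbreviation "lam j \<equiv> Hm $$ (j, j)"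
abbreviation "paths \<equiv> PiM UNIV (\<lambda>_::nat. P)"
abbreviation "W eta t om \<equiv> sgd Hs bs eta w0 t om"
abbreviation "stoch_grad w \<xi> j \<equiv> (\<Sum>l\<in>{0..<d}. Hs \<xi> $$ (j, l) * w $ l) - bs \<xi> $ j"

definition noise_covariance_eq :: "real \<Rightarrow> real vec \<Rightarrow> bool" where
  "noise_covariance_eq \<sigma> w \<longleftrightarrow> (\<forall>i<d. \<forall>j<d.
     (\<integral>\<xi>. noise Hm bm Hs bs w \<xi> $ i * noise Hm bm Hs bs w \<xi> $ j \<partial>P) = \<sigma>\<^sup>2 * Hm $$ (i, j))"

lemma Hm_carrier: "Hm \<in> carrier_mat d d"
  by (simp add: H_mean_def)

lemma Hm_mult_vec_nth:
  assumes "w \<in> carrier_vec d" "j < d"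
  shows "(Hm *\<^sub>v w) $ j = lam j * w $ j"
proof -
  have "(Hm *\<^sub>v w) $ j = (\<Sum>l\<in>{0..<d}. Hm $$ (j, l) * w $ l)"
    using assms Hm_carrier by (simp add: scalar_prod_def)
  also have "\<dots> = (\<Sum>l\<in>{0..<d}. if l = j then lam j * w $ j else 0)"
    using assms diagonal Hm_carrier by (intro sum.cong) (auto simp: diagonal_mat_def)
  also have "\<dots> = lam j * w $ j"
    using assms by simp
  finally show ?thesis .
qed

lemma lam_pos: "j < d \<Longrightarrow> 0 < lam j"
  using pos_def Hm_carrier Hm_mult_vec_nth[of "unit_vec d j" j]
  by (auto simp: pos_def_mat_def dest!: bspec[of _ _ "unit_vec d j"])

lemma bm_dim: "dim_vec bm = d"
  by (simp add: b_mean_def)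

lemma wopt_eq: "wopt = vec d (\<lambda>j. bm $ j / lam j)"
  unfolding wstar_def
proof (rule the_equality)
  let ?v = "vec d (\<lambda>j. bm $ j / lam j)"
  have v: "?v \<in> carrier_vec d"
    by simp
  have "Hm *\<^sub>v ?v = bm"
  proof (rule eq_vecI)
    fix j
    assume "j < dim_vec bm"
    then have j: "j < d"
      by (simp add: bm_dim)
    show "(Hm *\<^sub>v ?v) $ j = bm $ j"
      using Hm_mult_vec_nth[OF v j] lam_pos[OF j] j by simp
  qed (use Hm_carrier bm_dim in simp)
  with v show "?v \<in> carrier_vec d \<and> Hm *\<^sub>v ?v = bm" ..
next
  fix w
  assume w: "w \<in> carrier_vec d \<and> Hm *\<^sub>v w = bm"
  show "w = vec d (\<lambda>j. bm $ j / lam j)"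
  proof (rule eq_vecI)
    fix j
    assume "j < dim_vec (vec d (\<lambda>j. bm $ j / lam j))"
    then have j: "j < d"
      by simp
    show "w $ j = vec d (\<lambda>j. bm $ j / lam j) $ j"
      using Hm_mult_vec_nth[of w j] w lam_pos[OF j] j by (simp add: field_simps)
  qed (use w in simp)
qed

lemma wopt_carrier: "wopt \<in> carrier_vec d"
  by (simp add: wopt_eq)

lemma bm_nth: "j < d \<Longrightarrow> bm $ j = lam j * wopt $ j"
  using lam_pos[of j] by (simp add: wopt_eq)

lemma fobj_excess:
  assumes w: "w \<in> carrier_vec d"
  shows "fobj Hm bm w - fobj Hm bm wopt = (\<Sum>j<d. lam j * (w $ j - wopt $ j)\<^sup>2) / 2"
proof -
  have f: "fobj Hm bm u = (\<Sum>j<d. lam j * (u $ j)\<^sup>2) / 2 - (\<Sum>j<d. lam j * wopt $ j * u $ j)"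
    if u: "u \<in> carrier_vec d" for u
  proof -
    have "u \<bullet> (Hm *\<^sub>v u) = (\<Sum>j<d. u $ j * (Hm *\<^sub>v u) $ j)"
      using u Hm_carrier by (simp add: scalar_prod_def atLeast0LessThan del: index_mult_mat_vec)
    also have "\<dots> = (\<Sum>j<d. lam j * (u $ j)\<^sup>2)"
      using u by (intro sum.cong) (simp_all add: Hm_mult_vec_nth power2_eq_square del: index_mult_mat_vec)
    finally have "u \<bullet> (Hm *\<^sub>v u) = (\<Sum>j<d. lam j * (u $ j)\<^sup>2)" .
    moreover have "bm \<bullet> u = (\<Sum>j<d. lam j * wopt $ j * u $ j)"
      using u by (simp add: scalar_prod_def atLeast0LessThan bm_nth)
    ultimately show ?thesis
      by (simp add: fobj_def)
  qed
  have "(\<Sum>j<d. lam j * (w $ j - wopt $ j)\<^sup>2)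
      = (\<Sum>j<d. lam j * (w $ j)\<^sup>2 - 2 * (lam j * wopt $ j * w $ j) + lam j * (wopt $ j)\<^sup>2)"
    by (intro sum.cong) (simp_all add: power2_diff algebra_simps)
  also have "\<dots> = (\<Sum>j<d. lam j * (w $ j)\<^sup>2) - 2 * (\<Sum>j<d. lam j * wopt $ j * w $ j)
      + (\<Sum>j<d. lam j * (wopt $ j)\<^sup>2)"
    by (simp add: sum.distrib sum_subtractf sum_distrib_left)
  moreover have "(\<Sum>j<d. lam j * wopt $ j * wopt $ j) = (\<Sum>j<d. lam j * (wopt $ j)\<^sup>2)"
    by (simp add: power2_eq_square mult.assoc)
  ultimately show ?thesis
    unfolding f[OF w] f[OF wopt_carrier] by simp
qed

lemma prob_space_paths: "prob_space paths"
  by (simp add: prob_P prob_space_PiM)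

lemma space_paths_nth: "om \<in> space paths \<Longrightarrow> om t \<in> space P"
  by (auto simp: space_PiM)

lemma sgd_carrier:
  assumes om: "om \<in> space paths"
  shows "W eta t om \<in> carrier_vec d"
proof (induction t)
  case (Suc t)
  have "Hs (om t) *\<^sub>v W eta t om - bs (om t) \<in> carrier_vec d"
    using Suc Hs_carrier[OF space_paths_nth[OF om]] bs_carrier[OF space_paths_nth[OF om]]
    by (intro minus_carrier_vec mult_mat_vec_carrier) auto
  then show ?case
    using Suc by simp
qed (simp add: w0_carrier)

lemma sgd_Suc_nth:
  assumes om: "om \<in> space paths" and j: "j < d"
  shows "W eta (Suc t) om $ j = W eta t om $ j - eta t * stoch_grad (W eta t om) (om t) j"
  using sgd_carrier[OF om, of eta t] Hs_carrier[OF space_paths_nth[OF om, of t]]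
    bs_carrier[OF space_paths_nth[OF om, of t]] j
  by (simp add: scalar_prod_def)

lemma sgd_nth_measurable: "j < d \<Longrightarrow> (\<lambda>om. W eta t om $ j) \<in> borel_measurable paths"
proof (induction t arbitrary: j)
  case (Suc t)
  have entry: "(\<lambda>om. f (om t)) \<in> borel_measurable paths" if "f \<in> borel_measurable P" for f :: "'s \<Rightarrow> real"
    using measurable_compose[OF measurable_component_singleton[of t UNIV "\<lambda>_. P"] that] by simp
  have "(\<lambda>om. W eta t om $ j - eta t * stoch_grad (W eta t om) (om t) j) \<in> borel_measurable paths"
    using Suc Hs_square_integrable bs_square_integrable
    by (intro borel_measurable_diff borel_measurable_times borel_measurable_const borel_measurable_sum entry)
      (auto simp: square_integrable_def)
  then show ?case
    using sgd_Suc_nth[OF _ Suc.prems] by (subst measurable_cong) auto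
qed simp

lemma sgd_fun_upd: "t \<le> u \<Longrightarrow> W eta t (om(u := y)) = W eta t om"
  by (induction t) auto

lemma stoch_grad_square_integrable: "j < d \<Longrightarrow> square_integrable P (\<lambda>\<xi>. stoch_grad w \<xi> j)"
  using Hs_square_integrable bs_square_integrable
  by (intro square_integrable_diff P.square_integrable_sum)
    (auto simp: mult.commute[of _ "w $ _"] intro: square_integrable_cmult)

lemma integral_stoch_grad:
  assumes w: "w \<in> carrier_vec d" and j: "j < d"
  shows "(\<integral>\<xi>. stoch_grad w \<xi> j \<partial>P) = lam j * (w $ j - wopt $ j)"
proof -
  have H: "integrable P (\<lambda>\<xi>. Hs \<xi> $$ (j, l) * w $ l)" if "l < d" for l
    using Hs_square_integrable[OF j that]
    by (auto simp: square_integrable_def intro: P.square_integrable_imp_integrable)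
  have b: "integrable P (\<lambda>\<xi>. bs \<xi> $ j)"
    using bs_square_integrable[OF j]
    by (auto simp: square_integrable_def intro: P.square_integrable_imp_integrable)
  have "(\<integral>\<xi>. stoch_grad w \<xi> j \<partial>P)
      = (\<integral>\<xi>. (\<Sum>l\<in>{0..<d}. Hs \<xi> $$ (j, l) * w $ l) \<partial>P) - (\<integral>\<xi>. bs \<xi> $ j \<partial>P)"
    using H b by (intro Bochner_Integration.integral_diff Bochner_Integration.integrable_sum) auto
  also have "(\<integral>\<xi>. (\<Sum>l\<in>{0..<d}. Hs \<xi> $$ (j, l) * w $ l) \<partial>P)
      = (\<Sum>l\<in>{0..<d}. Hm $$ (j, l) * w $ l)"
    using H j by (subst Bochner_Integration.integral_sum) (auto simp: H_mean_def)
  also have "(\<Sum>l\<in>{0..<d}. Hm $$ (j, l) * w $ l) = (Hm *\<^sub>v w) $ j"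
    using w j Hm_carrier by (simp add: scalar_prod_def)
  also have "(\<integral>\<xi>. bs \<xi> $ j \<partial>P) = bm $ j"
    using j by (simp add: b_mean_def)
  finally show ?thesis
    using w j by (simp add: Hm_mult_vec_nth bm_nth algebra_simps)
qed

lemma noise_nth:
  assumes "w \<in> carrier_vec d" "\<xi> \<in> space P" "j < d"
  shows "noise Hm bm Hs bs w \<xi> $ j = lam j * (w $ j - wopt $ j) - stoch_grad w \<xi> j"
proof -
  have "noise Hm bm Hs bs w \<xi> $ j = (Hm *\<^sub>v w) $ j - bm $ j - ((Hs \<xi> *\<^sub>v w) $ j - bs \<xi> $ j)"
    using assms bs_carrier[OF assms(2)] Hs_carrier[OF assms(2)] Hm_carrier
    by (simp add: noise_def bm_dim del: index_mult_mat_vec)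
  also have "(Hs \<xi> *\<^sub>v w) $ j = (\<Sum>l\<in>{0..<d}. Hs \<xi> $$ (j, l) * w $ l)"
    using assms Hs_carrier[OF assms(2)] by (simp add: scalar_prod_def)
  finally show ?thesis
    using assms by (simp add: Hm_mult_vec_nth bm_nth algebra_simps del: index_mult_mat_vec)
qed

lemma expected_sq_error_one_step:
  assumes w: "w \<in> carrier_vec d" and j: "j < d"
    and cov: "(\<integral>\<xi>. noise Hm bm Hs bs w \<xi> $ j * noise Hm bm Hs bs w \<xi> $ j \<partial>P) = \<sigma>\<^sup>2 * lam j"
  shows "(\<integral>\<^sup>+ \<xi>. ennreal (lam j * (w $ j - \<eta> * stoch_grad w \<xi> j - wopt $ j)\<^sup>2) \<partial>P)
    = ennreal ((1 - \<eta> * lam j)\<^sup>2 * (lam j * (w $ j - wopt $ j)\<^sup>2) + \<sigma>\<^sup>2 * (\<eta> * lam j)\<^sup>2)"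
proof -
  define N where "N \<xi> = lam j * (w $ j - wopt $ j) - stoch_grad w \<xi> j" for \<xi>
  have N: "square_integrable P N"
    unfolding N_def using j by (intro square_integrable_diff P.square_integrable_const stoch_grad_square_integrable)
  have "integrable P (\<lambda>\<xi>. stoch_grad w \<xi> j)"
    using stoch_grad_square_integrable[OF j] by (auto simp: square_integrable_def intro: P.square_integrable_imp_integrable)
  then have centered: "(\<integral>\<xi>. N \<xi> \<partial>P) = 0"
    unfolding N_def by (simp add: Bochner_Integration.integral_diff integral_stoch_grad[OF w j] P.prob_space)
  have "(\<integral>\<xi>. (N \<xi>)\<^sup>2 \<partial>P) = (\<integral>\<xi>. noise Hm bm Hs bs w \<xi> $ j * noise Hm bm Hs bs w \<xi> $ j \<partial>P)"
    by (intro Bochner_Integration.integral_cong) (simp_all add: N_def noise_nth[OF w _ j] power2_eq_square)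
  then have second_moment: "(\<integral>\<xi>. (N \<xi>)\<^sup>2 \<partial>P) = \<sigma>\<^sup>2 * lam j"
    using cov by simp
  have step: "w $ j - \<eta> * stoch_grad w \<xi> j - wopt $ j = (1 - \<eta> * lam j) * (w $ j - wopt $ j) + \<eta> * N \<xi>" for \<xi>
    by (simp add: N_def algebra_simps)
  have "square_integrable P (\<lambda>\<xi>. (1 - \<eta> * lam j) * (w $ j - wopt $ j) + \<eta> * N \<xi>)"
    by (intro square_integrable_add P.square_integrable_const square_integrable_cmult N)
  then have "integrable P (\<lambda>\<xi>. lam j * (w $ j - \<eta> * stoch_grad w \<xi> j - wopt $ j)\<^sup>2)"
    unfolding step by (simp add: square_integrable_def)
  then have "(\<integral>\<^sup>+ \<xi>. ennreal (lam j * (w $ j - \<eta> * stoch_grad w \<xi> j - wopt $ j)\<^sup>2) \<partial>P)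
      = ennreal (lam j * (\<integral>\<xi>. ((1 - \<eta> * lam j) * (w $ j - wopt $ j) + \<eta> * N \<xi>)\<^sup>2 \<partial>P))"
    using lam_pos[OF j] by (subst nn_integral_eq_integral) (auto simp: step)
  also have "\<dots> = ennreal ((1 - \<eta> * lam j)\<^sup>2 * (lam j * (w $ j - wopt $ j)\<^sup>2) + \<sigma>\<^sup>2 * (\<eta> * lam j)\<^sup>2)"
    unfolding P.expectation_affine_square[OF N centered] second_moment
    by (simp add: power2_eq_square algebra_simps)
  finally show ?thesis .
qed

lemma expected_sq_error_Suc_given_past:
  assumes om: "om \<in> space paths" and j: "j < d" and cov: "noise_covariance_eq \<sigma> (W eta t om)"
  shows "(\<integral>\<^sup>+ \<xi>. ennreal (lam j * (W eta (Suc t) (om(t := \<xi>)) $ j - wopt $ j)\<^sup>2) \<partial>P)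
    = ennreal ((1 - eta t * lam j)\<^sup>2 * (lam j * (W eta t om $ j - wopt $ j)\<^sup>2) + \<sigma>\<^sup>2 * (eta t * lam j)\<^sup>2)"
proof -
  have "(\<integral>\<^sup>+ \<xi>. ennreal (lam j * (W eta (Suc t) (om(t := \<xi>)) $ j - wopt $ j)\<^sup>2) \<partial>P)
      = (\<integral>\<^sup>+ \<xi>. ennreal (lam j * (W eta t om $ j - eta t * stoch_grad (W eta t om) \<xi> j - wopt $ j)\<^sup>2) \<partial>P)"
  proof (rule nn_integral_cong)
    fix \<xi>
    assume "\<xi> \<in> space P"
    then have "om(t := \<xi>) \<in> space paths"
      using om by (auto simp: space_PiM)
    then show "ennreal (lam j * (W eta (Suc t) (om(t := \<xi>)) $ j - wopt $ j)\<^sup>2)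
        = ennreal (lam j * (W eta t om $ j - eta t * stoch_grad (W eta t om) \<xi> j - wopt $ j)\<^sup>2)"
      using j by (simp add: sgd_Suc_nth sgd_fun_upd del: sgd.simps)
  qed
  also have "\<dots> = ennreal ((1 - eta t * lam j)\<^sup>2 * (lam j * (W eta t om $ j - wopt $ j)\<^sup>2)
      + \<sigma>\<^sup>2 * (eta t * lam j)\<^sup>2)"
  proof (rule expected_sq_error_one_step[OF sgd_carrier[OF om] j])
    show "(\<integral>\<xi>. noise Hm bm Hs bs (W eta t om) \<xi> $ j * noise Hm bm Hs bs (W eta t om) \<xi> $ j \<partial>P)
        = \<sigma>\<^sup>2 * lam j"
      using cov j by (simp add: noise_covariance_eq_def)
  qed
  finally show ?thesis .
qed

(* Integrating out the fresh sample om t first conditions on the past, as W eta t does not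
   depend on om t.  Working with nonnegative integrals avoids having to show that the iterates
   are square integrable, which would need higher moments of H(xi). *)
lemma expected_sq_error_Suc:
  assumes j: "j < d" and cov: "AE om in paths. noise_covariance_eq \<sigma> (W eta t om)"
  shows "(\<integral>\<^sup>+ om. ennreal (lam j * (W eta (Suc t) om $ j - wopt $ j)\<^sup>2) \<partial>paths)
    = ennreal ((1 - eta t * lam j)\<^sup>2) * (\<integral>\<^sup>+ om. ennreal (lam j * (W eta t om $ j - wopt $ j)\<^sup>2) \<partial>paths)
      + ennreal (\<sigma>\<^sup>2 * (eta t * lam j)\<^sup>2)"
proof -
  interpret paths: prob_space paths
    by (rule prob_space_paths)
  have [measurable]: "(\<lambda>om. W eta u om $ j) \<in> borel_measurable paths" for u
    using j by (rule sgd_nth_measurable)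
  have "(\<lambda>om. ennreal (lam j * (W eta (Suc t) om $ j - wopt $ j)\<^sup>2)) \<in> borel_measurable paths"
    by measurable
  then have "(\<integral>\<^sup>+ om. ennreal (lam j * (W eta (Suc t) om $ j - wopt $ j)\<^sup>2) \<partial>paths)
      = (\<integral>\<^sup>+ om. \<integral>\<^sup>+ \<xi>. ennreal (lam j * (W eta (Suc t) (om(t := \<xi>)) $ j - wopt $ j)\<^sup>2) \<partial>P \<partial>paths)"
    by (intro nn_integral_PiM_resample) (auto simp: prob_P)
  also have "\<dots> = (\<integral>\<^sup>+ om. ennreal ((1 - eta t * lam j)\<^sup>2 * (lam j * (W eta t om $ j - wopt $ j)\<^sup>2)
      + \<sigma>\<^sup>2 * (eta t * lam j)\<^sup>2) \<partial>paths)"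
  proof (rule nn_integral_cong_AE, rule AE_mp[OF cov AE_I2], rule impI)
    fix om
    assume om: "om \<in> space paths" and cov_om: "noise_covariance_eq \<sigma> (W eta t om)"
    show "(\<integral>\<^sup>+ \<xi>. ennreal (lam j * (W eta (Suc t) (om(t := \<xi>)) $ j - wopt $ j)\<^sup>2) \<partial>P)
        = ennreal ((1 - eta t * lam j)\<^sup>2 * (lam j * (W eta t om $ j - wopt $ j)\<^sup>2) + \<sigma>\<^sup>2 * (eta t * lam j)\<^sup>2)"
      by (rule expected_sq_error_Suc_given_past[OF om j cov_om])
  qed
  also have "\<dots> = ennreal ((1 - eta t * lam j)\<^sup>2) * (\<integral>\<^sup>+ om. ennreal (lam j * (W eta t om $ j - wopt $ j)\<^sup>2) \<partial>paths)
      + ennreal (\<sigma>\<^sup>2 * (eta t * lam j)\<^sup>2)"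
    using lam_pos[OF j]
    by (simp add: nn_integral_add nn_integral_cmult ennreal_plus ennreal_mult paths.emeasure_space_1)
  finally show ?thesis .
qed

lemma expected_sq_error_eq_noisy_rec:
  assumes j: "j < d" and eta0: "eta 0 = 0"
    and cov: "\<forall>t\<in>{1..T}. AE om in paths. noise_covariance_eq \<sigma> (W eta t om)"
  shows "t \<le> T + 1 \<Longrightarrow> (\<integral>\<^sup>+ om. ennreal (lam j * (W eta t om $ j - wopt $ j)\<^sup>2) \<partial>paths)
    = ennreal (noisy_rec (\<lambda>t. eta t * lam j) (\<sigma>\<^sup>2) (lam j * (w0 $ j - wopt $ j)\<^sup>2) t)"
proof (induction t)
  case 0
  interpret paths: prob_space paths
    by (rule prob_space_paths)
  show ?case
    by (simp add: paths.emeasure_space_1)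
next
  case (Suc t)
  have nonneg: "0 \<le> noisy_rec (\<lambda>t. eta t * lam j) (\<sigma>\<^sup>2) (lam j * (w0 $ j - wopt $ j)\<^sup>2) t"
    using lam_pos[OF j] by (intro noisy_rec_nonneg) auto
  show ?case
  proof (cases "t = 0")
    case True
    have "(\<integral>\<^sup>+ om. ennreal (lam j * (W eta 1 om $ j - wopt $ j)\<^sup>2) \<partial>paths)
        = (\<integral>\<^sup>+ om. ennreal (lam j * (W eta 0 om $ j - wopt $ j)\<^sup>2) \<partial>paths)"
      using j eta0 by (intro nn_integral_cong) (simp add: sgd_Suc_nth del: sgd.simps)
    then show ?thesis
      using Suc True eta0 by simp
  next
    case False
    then have "AE om in paths. noise_covariance_eq \<sigma> (W eta t om)"
      using cov Suc.prems by auto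
    then show ?thesis
      using expected_sq_error_Suc[OF j] Suc lam_pos[OF j] nonneg
      by (simp add: ennreal_mult ennreal_plus del: sgd.simps)
  qed
qed

lemma expected_excess_loss:
  assumes V: "\<And>j. j < d \<Longrightarrow> (\<integral>\<^sup>+ om. ennreal (lam j * (W eta t om $ j - wopt $ j)\<^sup>2) \<partial>paths) = ennreal (V j)"
    and V_nonneg: "\<And>j. j < d \<Longrightarrow> 0 \<le> V j"
  shows "(\<integral>om. fobj Hm bm (W eta t om) - fobj Hm bm wopt \<partial>paths) = (\<Sum>j<d. V j) / 2"
proof -
  have meas: "(\<lambda>om. lam j * (W eta t om $ j - wopt $ j)\<^sup>2) \<in> borel_measurable paths" if "j < d" for j
    using sgd_nth_measurable[OF that] by measurable
  have "integrable paths (\<lambda>om. lam j * (W eta t om $ j - wopt $ j)\<^sup>2)" if "j < d" for j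
    using that lam_pos[OF that] V[OF that] by (intro integrableI_nn_integral_finite[OF meas]) auto
  moreover have "(\<integral>om. lam j * (W eta t om $ j - wopt $ j)\<^sup>2 \<partial>paths) = V j" if "j < d" for j
    using integral_eq_nn_integral[OF meas[OF that]] V[OF that] V_nonneg[OF that] lam_pos[OF that] by simp
  ultimately have "(\<integral>om. (\<Sum>j<d. lam j * (W eta t om $ j - wopt $ j)\<^sup>2) / 2 \<partial>paths) = (\<Sum>j<d. V j) / 2"
    by (simp add: Bochner_Integration.integral_sum)
  moreover have "(\<integral>om. fobj Hm bm (W eta t om) - fobj Hm bm wopt \<partial>paths)
      = (\<integral>om. (\<Sum>j<d. lam j * (W eta t om $ j - wopt $ j)\<^sup>2) / 2 \<partial>paths)"
    by (intro Bochner_Integration.integral_cong) (simp_all add: fobj_excess sgd_carrier del: sgd.simps)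
  ultimately show ?thesis
    by simp
qed

lemma step_decay_expected_excess_loss:
  assumes cov: "\<forall>t\<in>{1..T}. AE om in paths. noise_covariance_eq \<sigma> (W (step_decay eta1 T k) t om)"
  shows "(\<integral>om. fobj Hm bm (W (step_decay eta1 T k) (T + 1) om) - fobj Hm bm wopt \<partial>paths)
    = (\<Sum>j<d. noisy_rec (step_decay (eta1 * lam j) T k) (\<sigma>\<^sup>2) (lam j * (w0 $ j - wopt $ j)\<^sup>2) (T + 1)) / 2"
proof (rule expected_excess_loss)
  fix j
  assume j: "j < d"
  have "(\<lambda>t. step_decay eta1 T k t * lam j) = step_decay (eta1 * lam j) T k"
    by (simp add: fun_eq_iff step_decay_mult)
  moreover have "step_decay eta1 T k 0 = 0"
    by (simp add: step_decay_def)
  ultimately show "(\<integral>\<^sup>+ om. ennreal (lam j * (W (step_decay eta1 T k) (T + 1) om $ j - wopt $ j)\<^sup>2) \<partial>paths)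
      = ennreal (noisy_rec (step_decay (eta1 * lam j) T k) (\<sigma>\<^sup>2) (lam j * (w0 $ j - wopt $ j)\<^sup>2) (T + 1))"
    using expected_sq_error_eq_noisy_rec[OF j _ cov, of "T + 1"] by simp
  show "0 \<le> noisy_rec (step_decay (eta1 * lam j) T k) (\<sigma>\<^sup>2) (lam j * (w0 $ j - wopt $ j)\<^sup>2) (T + 1)"
    using lam_pos[OF j] by (simp add: noisy_rec_nonneg)
qed

lemma step_decay_excess_loss_lower_bound:
  assumes eta1: "0 < eta1"
  shows "\<exists>T0. \<forall>T k. T = 2 ^ k \<and> 0 < k \<and> k dvd T \<and> T0 \<le> T \<and>
      (\<forall>t\<in>{1..T}. AE om in paths. noise_covariance_eq \<sigma> (W (step_decay eta1 T k) t om)) \<longrightarrow>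
      exp (- 8) / 8 * (real d * \<sigma>\<^sup>2 / real T * log 2 (real T))
        \<le> (\<integral>om. fobj Hm bm (W (step_decay eta1 T k) (T + 1) om) - fobj Hm bm wopt \<partial>paths)"
proof -
  define a where "a j = eta1 * lam j" for j
  have a_pos: "0 < a j" if "j < d" for j
    using eta1 lam_pos[OF that] by (simp add: a_def)
  define K where "K = nat \<lceil>\<Sum>j<d. 4 / a j + 2 * a j\<rceil>"
  show ?thesis
  proof (intro exI[of _ "2 ^ K"] allI impI, elim conjE)
    fix T k :: nat
    assume T: "T = 2 ^ k" and "k dvd T" "2 ^ K \<le> T"
      and cov: "\<forall>t\<in>{1..T}. AE om in paths. noise_covariance_eq \<sigma> (W (step_decay eta1 T k) t om)"
    have "(\<Sum>j<d. 4 / a j + 2 * a j) \<le> k"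
      using \<open>2 ^ K \<le> T\<close> T by (simp add: K_def)
    moreover have "0 < 4 / a j + 2 * a j" if "j < d" for j
      using a_pos[OF that] by (simp add: add_pos_pos)
    then have "4 / a j + 2 * a j \<le> (\<Sum>j<d. 4 / a j + 2 * a j)" if "j < d" for j
      using that by (intro member_le_sum) (auto simp: less_imp_le)
    ultimately have "4 / a j + 2 * a j \<le> k" if "j < d" for j
      using that by fastforce
    then have "exp (- 8) / 4 * \<sigma>\<^sup>2 * log 2 T / T
        \<le> noisy_rec (step_decay (a j) T k) (\<sigma>\<^sup>2) (lam j * (w0 $ j - wopt $ j)\<^sup>2) (T + 1)" if "j < d" for j
      using T \<open>k dvd T\<close> a_pos[OF that] lam_pos[OF that] that
      by (intro noisy_rec_step_decay_lower_bound) auto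
    then have "real d * (exp (- 8) / 4 * \<sigma>\<^sup>2 * log 2 T / T)
        \<le> (\<Sum>j<d. noisy_rec (step_decay (a j) T k) (\<sigma>\<^sup>2) (lam j * (w0 $ j - wopt $ j)\<^sup>2) (T + 1))"
      using sum_mono[of "{..<d}" "\<lambda>_. exp (- 8) / 4 * \<sigma>\<^sup>2 * log 2 T / T"] by fastforce
    then show "exp (- 8) / 8 * (real d * \<sigma>\<^sup>2 / real T * log 2 (real T))
        \<le> (\<integral>om. fobj Hm bm (W (step_decay eta1 T k) (T + 1) om) - fobj Hm bm wopt \<partial>paths)"
      unfolding step_decay_expected_excess_loss[OF cov] a_def by (simp add: divide_right_mono mult_ac)
  qed
qed

end

theorem theorem2:
  "\<exists>c::real. c > 0 \<and>
    (\<forall>(d::nat) (P::'s measure) (Hs::'s \<Rightarrow> real mat) (bs::'s \<Rightarrow> real vec)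
       (w0::real vec) (\<sigma>::real) (eta1::real).
      prob_space P \<and>
      (\<forall>\<xi>\<in>space P. Hs \<xi> \<in> carrier_mat d d \<and> symmetric_mat (Hs \<xi>) \<and> bs \<xi> \<in> carrier_vec d) \<and>
      (\<forall>i<d. \<forall>j<d. (\<lambda>\<xi>. Hs \<xi> $$ (i,j)) \<in> borel_measurable P \<and>
                    integrable P (\<lambda>\<xi>. (Hs \<xi> $$ (i,j))\<^sup>2)) \<and>
      (\<forall>i<d. (\<lambda>\<xi>. bs \<xi> $ i) \<in> borel_measurable P \<and> integrable P (\<lambda>\<xi>. (bs \<xi> $ i)\<^sup>2)) \<and>
      w0 \<in> carrier_vec d \<and>
      pos_def_mat d (H_mean P Hs d) \<and>
      0 < eta1 \<and> eta1 \<le> 1 / lambda_max (H_mean P Hs d) \<and>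
      diagonal_mat (H_mean P Hs d) \<and>
      (\<forall>j<d. H_mean P Hs d $$ (j,j) *
               (w0 $ j - wstar d (H_mean P Hs d) (b_mean P bs d) $ j)\<^sup>2 \<noteq> 0)
      \<longrightarrow>
      (\<exists>T0::nat. \<forall>(T::nat) (k::nat).
         T = 2 ^ k \<and> 0 < k \<and> k dvd T \<and> T0 \<le> T \<and>
         (\<forall>t\<in>{1..T}. AE om in PiM UNIV (\<lambda>_. P).
            \<forall>i<d. \<forall>j<d.
              (\<integral>\<xi>. noise (H_mean P Hs d) (b_mean P bs d) Hs bs
                       (sgd Hs bs (step_decay eta1 T k) w0 t om) \<xi> $ i *
                     noise (H_mean P Hs d) (b_mean P bs d) Hs bs
                       (sgd Hs bs (step_decay eta1 T k) w0 t om) \<xi> $ j \<partial>P)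
              = \<sigma>\<^sup>2 * H_mean P Hs d $$ (i,j))
         \<longrightarrow>
         (\<integral>om. fobj (H_mean P Hs d) (b_mean P bs d) (sgd Hs bs (step_decay eta1 T k) w0 (T + 1) om)
               - fobj (H_mean P Hs d) (b_mean P bs d) (wstar d (H_mean P Hs d) (b_mean P bs d))
            \<partial>PiM UNIV (\<lambda>_. P))
         \<ge> c * (real d * \<sigma>\<^sup>2 / real T * log 2 (real T))))"
proof (intro exI[of _ "exp (- 8) / 8"] conjI allI impI, goal_cases)
  case 1
  show ?case
    by simp
next
  case (2 d P Hs bs w0 \<sigma> eta1)
  interpret diagonal_quadratic_sgd P d Hs bs w0
    by (rule diagonal_quadratic_sgd.intro) (use 2 in \<open>(unfold square_integrable_def)?, blast\<close>)+
  have "0 < eta1"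
    using 2 by blast
  from step_decay_excess_loss_lower_bound[OF this, of \<sigma>] show ?case
    unfolding noise_covariance_eq_def .
qed

end
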